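(* Let $P$ be a finite poset with a partition $P=P^*\sqcup C\sqcup O$ into marked, chain and order elements, where $\min(P)\subseteq P^*$. Let $\mathcal{I}=(I_0,\dots,I_{k-1})\in\mathfrak{I}(P^* )$ and $\lambda,\mu\in\mathcal{L}(P^*,\mathcal{I})$. Then \[\mathcal{O}_{C,O}(P,\lambda+\mu)=\mathcal{O}_{C,O}(P,\lambda)+\mathcal{O}_{C,O}(P,\mu).\] Furthermore, if $\lambda$ and $\mu$ are both integral, then \[\mathcal{O}^{\mathbb{Z}}_{C,O}(P,\lambda+\mu)=\mathcal{O}^{\mathbb{Z}}_{C,O}(P,\lambda)+\mathcal{O}^{\mathbb{Z}}_{C,O}(P,\mu).\]
   Context: $p\prec q$ denotes a covering relation in $P$. For an order-preserving $\lambda\colon P^*\to\mathbb{R}$, the marked chain-order polyhedron $\mathcal{O}_{C,O}(P,\lambda)\subseteq\mathbb{R}^P$ is the set of all $\mathbf{x}=(x_p)_{p\in P}$ with: (1) $x_a=\lambda(a)$ for $a\in P^*$; (2) $x_p\ge 0$ for $p\in C$; (3) $x_{p_1}+\cdots+x_{p_r}\le x_b-x_a$ for every saturated chain $a\prec p_1\prec\cdots\prec p_r\prec b$ in $P$ with $a,b\in P^*\sqcup O$, all $p_i\in C$, $r\ge0$. $\mathcal{O}^{\mathbb{Z}}_{C,O}(P,\lambda)=\mathcal{O}_{C,O}(P,\lambda)\cap\mathbb{Z}^P$; Minkowski sums are denoted by $+$. $\mathfrak{I}(P^* )$ is the set of chains $\varnothing\ne I_0\subsetneq I_1\subsetneq\cdots\subsetneq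 I_{k-1}\ne P^*$ of order ideals of the poset $P^*$ (with $k\ge 1$; the empty chain with $k=1$... i.e. any such chain, possibly of length zero); set $I_{-1}=\varnothing$, $I_k=P^*$. For $\mathcal{I}\in\mathfrak{I}(P^* )$, $\mathcal{L}(P^*,\mathcal{I})$ is the set of order-preserving maps $f\colon P^*\to\mathbb{R}$ that are constant on each $I_j\setminus I_{j-1}$ ($j=0,\dots,k$) and satisfy $f(I_0\setminus I_{-1})\le f(I_1\setminus I_0)\le\cdots\le f(I_k\setminus I_{k-1})$. A marking is integral if it takes values in $\mathbb{Z}$. *)

theory Defs
  imports Main Complex_Main
begin

text \<open>The finite poset P is a finite subset of an ordered type, with the induced order.
Points of R^P are functions 'a => real vanishing outside P.\<close>

definition covers :: "'a::order set \<Rightarrow> 'a \<Rightarrow> 'a \<Rightarrow> bool" where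
  "covers P p q \<longleftrightarrow> p \<in> P \<and> q \<in> P \<and> p < q \<and> \<not> (\<exists>r\<in>P. p < r \<and> r < q)"

definition minimal_elements :: "'a::order set \<Rightarrow> 'a set" where
  "minimal_elements P = {p \<in> P. \<not> (\<exists>q\<in>P. q < p)}"

definition order_preserving_on :: "'a::order set \<Rightarrow> ('a \<Rightarrow> real) \<Rightarrow> bool" where
  "order_preserving_on A f \<longleftrightarrow> (\<forall>a\<in>A. \<forall>b\<in>A. a \<le> b \<longrightarrow> f a \<le> f b)"

definition mco_polyhedron ::
  "'a::order set \<Rightarrow> 'a set \<Rightarrow> 'a set \<Rightarrow> 'a set \<Rightarrow> ('a \<Rightarrow> real) \<Rightarrow> ('a \<Rightarrow> real) set" where
  "mco_polyhedron P Pstar C Ord lam =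
     {x. (\<forall>p. p \<notin> P \<longrightarrow> x p = 0)
       \<and> (\<forall>a\<in>Pstar. x a = lam a)
       \<and> (\<forall>p\<in>C. x p \<ge> 0)
       \<and> (\<forall>a b ps. a \<in> Pstar \<union> Ord \<longrightarrow> b \<in> Pstar \<union> Ord \<longrightarrow> set ps \<subseteq> C \<longrightarrow>
             successively (covers P) (a # ps @ [b]) \<longrightarrow>
             sum_list (map x ps) \<le> x b - x a)}"

definition mco_lattice_points ::
  "'a::order set \<Rightarrow> 'a set \<Rightarrow> 'a set \<Rightarrow> 'a set \<Rightarrow> ('a \<Rightarrow> real) \<Rightarrow> ('a \<Rightarrow> real) set" where
  "mco_lattice_points P Pstar C Ord lam =
     {x \<in> mco_polyhedron P Pstar C Ord lam. \<forall>p\<in>P. x p \<in> \<int>}"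

definition minkowski_sum :: "('a \<Rightarrow> real) set \<Rightarrow> ('a \<Rightarrow> real) set \<Rightarrow> ('a \<Rightarrow> real) set" where
  "minkowski_sum A B = {(\<lambda>p. x p + y p) | x y. x \<in> A \<and> y \<in> B}"

definition order_ideal :: "'a::order set \<Rightarrow> 'a set \<Rightarrow> bool" where
  "order_ideal Q I \<longleftrightarrow> I \<subseteq> Q \<and> (\<forall>p\<in>I. \<forall>q\<in>Q. q \<le> p \<longrightarrow> q \<in> I)"

definition ideal_chains :: "'a::order set \<Rightarrow> 'a set list set" where
  "ideal_chains Q = {Is. (\<forall>I\<in>set Is. order_ideal Q I)
       \<and> (Is \<noteq> [] \<longrightarrow> hd Is \<noteq> {} \<and> last Is \<noteq> Q)
       \<and> successively (\<subset>) Is}"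

text \<open>Blocks I_j - I_{j-1} for j = 0..k, with I_{-1} = {} and I_k = Pstar.\<close>
definition ideal_blocks :: "'a set \<Rightarrow> 'a set list \<Rightarrow> 'a set list" where
  "ideal_blocks Q Is = (let Js = Is @ [Q] in
      map (\<lambda>j. Js ! j - (if j = 0 then {} else Js ! (j - 1))) [0..<length Js])"

definition markings_L :: "'a::order set \<Rightarrow> 'a set list \<Rightarrow> ('a \<Rightarrow> real) set" where
  "markings_L Q Is = {f. order_preserving_on Q f
       \<and> (\<forall>B\<in>set (ideal_blocks Q Is). \<forall>a\<in>B. \<forall>b\<in>B. f a = f b)
       \<and> (\<forall>j. Suc j < length (ideal_blocks Q Is) \<longrightarrow>
            (\<forall>a\<in>ideal_blocks Q Is ! j. \<forall>b\<in>ideal_blocks Q Is ! Suc j. f a \<le> f b))}"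

end

theory Submission
  imports Defs
begin

text \<open>For a point z of the polyhedron let w p be the largest value of z a + z p1 + ... + z p over
saturated chains a \<prec> p1 \<prec> ... \<prec> p starting at a marked or order element a and running
through chain elements. Then w p - z p is the largest such value below p, so z can be read off from w. Applying a
monotone g : \<real> \<Rightarrow> \<real> to w and reading off again maps the polyhedron with marking s into the
one with marking g \<circ> s, since the chain inequalities telescope. Markings \<lambda>, \<mu> in L(P*, I) are
comonotone, so \<phi> t = min over a of \<mu> a + max 0 (t - \<lambda> a - \<mu> a) and t - \<phi> t are both
monotone and send \<lambda> a + \<mu> a to \<mu> a and \<lambda> a; the two transported points sum to z. As \<phi>
preserves integers when \<lambda> and \<mu> are integral, the same splitting works for lattice points.\<close>

section \<open>Maximal chain sums\<close>

lemma successively_covers_distinct: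
  assumes "successively (covers P) (xs :: 'a::order list)"
  shows "distinct xs"
proof -
  have "successively (<) xs"
    using assms by (rule successively_mono) (simp add: covers_def)
  then have "sorted_wrt (<) xs"
    by (simp add: successively_conv_sorted_wrt transp_on_less)
  then show ?thesis
    by (induction xs) auto
qed

definition chain_sums :: "'a::order set \<Rightarrow> 'a set \<Rightarrow> 'a set \<Rightarrow> ('a \<Rightarrow> real) \<Rightarrow> 'a \<Rightarrow> real set" where
  "chain_sums P A C z p = {z a + sum_list (map z ps) | a ps.
     a \<in> A \<and> set ps \<subseteq> C \<and> successively (covers P) (a # ps) \<and> last (a # ps) = p}"

(* The value 0 at points reached by no chain is arbitrary; it only has to be an integer. When
   min P is contained in P*, every chain element is reached, which is why the theorem never needs
   that hypothesis. *)
definition max_chain_sum :: "'a::order set \<Rightarrow> 'a set \<Rightarrow> 'a set \<Rightarrow> ('a \<Rightarrow> real) \<Rightarrow> 'a \<Rightarrow> real" where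
  "max_chain_sum P A C z p =
     (if chain_sums P A C z p = {} then 0 else Max (chain_sums P A C z p))"

lemma chain_sums_of_chain:
  assumes "a \<in> A" "set ps \<subseteq> C" "successively (covers P) (a # ps)"
  shows "z a + sum_list (map z ps) \<in> chain_sums P A C z (last (a # ps))"
  using assms unfolding chain_sums_def by blast

lemma chain_sums_snoc:
  assumes "v \<in> chain_sums P A C z q" "covers P q p" "p \<in> C"
  shows "v + z p \<in> chain_sums P A C z p"
proof -
  obtain a ps where v: "v = z a + sum_list (map z ps)" "a \<in> A" "set ps \<subseteq> C"
    "successively (covers P) (a # ps)" "last (a # ps) = q"
    using assms(1) unfolding chain_sums_def by blast
  have "successively (covers P) (a # ps @ [p])"
    using v(4,5) assms(2) successively_append_iff[of "covers P" "a # ps" "[p]"] by simp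
  then show ?thesis
    unfolding chain_sums_def mem_Collect_eq
    by (intro exI[of _ a] exI[of _ "ps @ [p]"]) (use v assms(3) in simp)
qed

lemma chain_sums_marked:
  assumes "A \<inter> C = {}" "b \<in> A"
  shows "chain_sums P A C z b = {z b}"
proof
  show "chain_sums P A C z b \<subseteq> {z b}"
  proof
    fix v assume "v \<in> chain_sums P A C z b"
    then obtain a ps where v: "v = z a + sum_list (map z ps)" "set ps \<subseteq> C" "last (a # ps) = b"
      unfolding chain_sums_def by blast
    have "ps = []"
      using v(2,3) assms by (cases ps rule: rev_cases) auto
    then show "v \<in> {z b}"
      using v by simp
  qed
  show "{z b} \<subseteq> chain_sums P A C z b"
    using chain_sums_of_chain[of b A "[]" C P z] assms(2) by simp
qed

lemma max_chain_sum_marked: "A \<inter> C = {} \<Longrightarrow> b \<in> A \<Longrightarrow> max_chain_sum P A C z b = z b"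
  by (simp add: max_chain_sum_def chain_sums_marked)

lemma finite_chain_sums:
  assumes "finite A" "finite C"
  shows "finite (chain_sums P A C z p)"
proof -
  have "chain_sums P A C z p \<subseteq>
      (\<lambda>(a, ps). z a + sum_list (map z ps)) ` (A \<times> {ps. set ps \<subseteq> C \<and> distinct ps})"
  proof
    fix v assume "v \<in> chain_sums P A C z p"
    then obtain a ps where "v = z a + sum_list (map z ps)" "a \<in> A" "set ps \<subseteq> C"
      "successively (covers P) (a # ps)"
      unfolding chain_sums_def by blast
    then show "v \<in> (\<lambda>(a, ps). z a + sum_list (map z ps)) ` (A \<times> {ps. set ps \<subseteq> C \<and> distinct ps})"
      by (auto intro!: image_eqI[of _ _ "(a, ps)"] dest: successively_covers_distinct)
  qed
  moreover have "finite (A \<times> {ps. set ps \<subseteq> C \<and> distinct ps})"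
    using assms by (simp add: finite_subset_distinct)
  ultimately show ?thesis
    by (meson finite_imageI finite_subset)
qed

context
  fixes P A C :: "'a::order set" and z :: "'a \<Rightarrow> real"
  assumes finite_A: "finite A" and finite_C: "finite C"
begin

lemma max_chain_sum_ge: "v \<in> chain_sums P A C z p \<Longrightarrow> v \<le> max_chain_sum P A C z p"
  using finite_chain_sums[OF finite_A finite_C] by (auto simp: max_chain_sum_def)

lemma max_chain_sum_in:
  "chain_sums P A C z p \<noteq> {} \<Longrightarrow> max_chain_sum P A C z p \<in> chain_sums P A C z p"
  using finite_chain_sums[OF finite_A finite_C] by (simp add: max_chain_sum_def)

lemma max_chain_sum_step:
  assumes "chain_sums P A C z q \<noteq> {}" "covers P q p" "p \<in> C"
  shows "max_chain_sum P A C z q + z p \<le> max_chain_sum P A C z p"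
  by (rule max_chain_sum_ge, rule chain_sums_snoc[OF max_chain_sum_in[OF assms(1)] assms(2,3)])

lemma max_chain_sum_le_marked:
  assumes "chain_sums P A C z q \<noteq> {}" "covers P q b" "b \<in> A"
    and chain_ineq: "\<And>a ps. a \<in> A \<Longrightarrow> set ps \<subseteq> C \<Longrightarrow> successively (covers P) (a # ps @ [b])
      \<Longrightarrow> sum_list (map z ps) \<le> z b - z a"
  shows "max_chain_sum P A C z q \<le> z b"
proof -
  obtain a ps where a: "max_chain_sum P A C z q = z a + sum_list (map z ps)" "a \<in> A" "set ps \<subseteq> C"
    "successively (covers P) (a # ps)" "last (a # ps) = q"
    using max_chain_sum_in[OF assms(1)] unfolding chain_sums_def by blast
  have "successively (covers P) (a # ps @ [b])"
    using a(4,5) assms(2) successively_append_iff[of "covers P" "a # ps" "[b]"] by simp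
  then have "sum_list (map z ps) \<le> z b - z a"
    using chain_ineq a(2,3) by blast
  then show ?thesis
    using a(1) by simp
qed

end

section \<open>Transport along monotone maps\<close>

definition transport ::
  "'a::order set \<Rightarrow> 'a set \<Rightarrow> 'a set \<Rightarrow> (real \<Rightarrow> real) \<Rightarrow> ('a \<Rightarrow> real) \<Rightarrow> 'a \<Rightarrow> real" where
  "transport P A C g z p =
     (if p \<in> A then g (z p)
      else if p \<in> C then g (max_chain_sum P A C z p) - g (max_chain_sum P A C z p - z p)
      else 0)"

lemma transport_chain_sum_le:
  assumes "finite A" "finite C" "A \<inter> C = {}" "mono g"
    and "a \<in> A" "set ps \<subseteq> C" "successively (covers P) (a # ps)"
  shows "sum_list (map (transport P A C g z) ps)
           \<le> g (max_chain_sum P A C z (last (a # ps))) - g (z a)"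
  using assms(6,7)
proof (induction ps rule: rev_induct)
  case Nil
  then show ?case
    using max_chain_sum_marked[OF assms(3,5)] by simp
next
  case (snoc p ps)
  let ?W = "max_chain_sum P A C z"
  let ?q = "last (a # ps)"
  have p: "p \<in> C" "p \<notin> A"
    using snoc.prems(1) assms(3) by auto
  have chain: "successively (covers P) (a # ps)" and cover: "covers P ?q p"
    using snoc.prems(2) successively_append_iff[of "covers P" "a # ps" "[p]"] by auto
  have "z a + sum_list (map z ps) \<in> chain_sums P A C z ?q"
    using assms(5) snoc.prems(1) chain by (intro chain_sums_of_chain) auto
  then have "chain_sums P A C z ?q \<noteq> {}"
    by blast
  then have "?W ?q \<le> ?W p - z p"
    using max_chain_sum_step[OF assms(1,2) _ cover p(1), of z] by linarith
  then have "g (?W ?q) \<le> g (?W p - z p)"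
    by (rule monoD[OF assms(4)])
  moreover have "transport P A C g z p = g (?W p) - g (?W p - z p)"
    using p by (simp add: transport_def)
  moreover have "sum_list (map (transport P A C g z) ps) \<le> g (?W ?q) - g (z a)"
    using snoc chain by simp
  ultimately show ?case
    by simp
qed

lemma transport_mem_mco_polyhedron:
  assumes "finite P" "P = Pstar \<union> C \<union> Ord" "Pstar \<inter> C = {}" "C \<inter> Ord = {}"
    and z: "z \<in> mco_polyhedron P Pstar C Ord s"
    and "mono g" "\<forall>a\<in>Pstar. g (s a) = l a"
  shows "transport P (Pstar \<union> Ord) C g z \<in> mco_polyhedron P Pstar C Ord l"
proof -
  let ?A = "Pstar \<union> Ord"
  let ?W = "max_chain_sum P ?A C z"
  let ?x = "transport P ?A C g z"
  have fin: "finite ?A" "finite C" and disj: "?A \<inter> C = {}"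
    using assms(1-4) by (auto intro: finite_subset)
  have z_chain: "sum_list (map z ps) \<le> z b - z a"
    if "a \<in> ?A" "b \<in> ?A" "set ps \<subseteq> C" "successively (covers P) (a # ps @ [b])" for a b ps
    using z that unfolding mco_polyhedron_def by blast
  show ?thesis
    unfolding mco_polyhedron_def mem_Collect_eq
  proof (intro conjI allI impI ballI)
    show "?x p = 0" if "p \<notin> P" for p
      using that assms(2) by (simp add: transport_def)
    show "?x a = l a" if "a \<in> Pstar" for a
      using that z assms(7) by (simp add: transport_def mco_polyhedron_def)
    show "?x p \<ge> 0" if p: "p \<in> C" for p
    proof -
      have "z p \<ge> 0"
        using z p unfolding mco_polyhedron_def by blast
      then have "g (?W p - z p) \<le> g (?W p)"
        using assms(6) by (simp add: monoD)
      then show ?thesis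
        using p disj by (auto simp: transport_def)
    qed
    show "sum_list (map ?x ps) \<le> ?x b - ?x a"
      if ab: "a \<in> ?A" "b \<in> ?A" and ps: "set ps \<subseteq> C" "successively (covers P) (a # ps @ [b])"
      for a b ps
    proof -
      let ?q = "last (a # ps)"
      have chain: "successively (covers P) (a # ps)" and cover: "covers P ?q b"
        using ps(2) successively_append_iff[of "covers P" "a # ps" "[b]"] by auto
      have "chain_sums P ?A C z ?q \<noteq> {}"
        using chain_sums_of_chain[OF ab(1) ps(1) chain, of z] by auto
      then have "?W ?q \<le> z b"
        using cover ab(2) z_chain[OF _ ab(2)] by (rule max_chain_sum_le_marked[OF fin])
      then have "g (?W ?q) \<le> g (z b)"
        by (rule monoD[OF assms(6)])
      moreover have "?x a = g (z a)" "?x b = g (z b)"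
        using ab by (simp_all add: transport_def)
      ultimately show ?thesis
        using transport_chain_sum_le[OF fin disj assms(6) ab(1) ps(1) chain, of z] by linarith
    qed
  qed
qed

lemma transport_add:
  assumes "\<And>t. g t + h t = t" "p \<notin> A \<union> C \<Longrightarrow> z p = 0"
  shows "transport P A C g z p + transport P A C h z p = z p"
proof -
  have "g u - g (u - v) + (h u - h (u - v)) = v" for u v
    using assms(1)[of u] assms(1)[of "u - v"] by simp
  then show ?thesis
    using assms by (simp add: transport_def)
qed

lemma transport_Ints:
  assumes "finite A" "finite C" "\<forall>p \<in> A \<union> C. z p \<in> \<int>" "\<And>t. t \<in> \<int> \<Longrightarrow> g t \<in> \<int>"
  shows "transport P A C g z p \<in> \<int>"
proof -
  have "sum_list (map z ps) \<in> \<int>" if "set ps \<subseteq> C" for ps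
    using that assms(3) by (induction ps) auto
  then have "chain_sums P A C z q \<subseteq> \<int>" for q
    using assms(3) unfolding chain_sums_def by auto
  then have W: "max_chain_sum P A C z q \<in> \<int>" for q
    using max_chain_sum_in[OF assms(1,2), of P z q]
    by (cases "chain_sums P A C z q = {}") (auto simp: max_chain_sum_def)
  show ?thesis
    unfolding transport_def using W assms(3) by (auto intro!: assms(4) Ints_diff)
qed

lemma minkowski_sum_eqI:
  assumes "\<And>x y. x \<in> A \<Longrightarrow> y \<in> B \<Longrightarrow> (\<lambda>p. x p + y p) \<in> S"
    and "\<And>z. z \<in> S \<Longrightarrow> \<exists>x\<in>A. \<exists>y\<in>B. z = (\<lambda>p. x p + y p)"
  shows "S = minkowski_sum A B"
  using assms unfolding minkowski_sum_def by blast

lemma mco_polyhedron_add: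
  assumes x: "x \<in> mco_polyhedron P Pstar C Ord lam" and y: "y \<in> mco_polyhedron P Pstar C Ord mu"
  shows "(\<lambda>p. x p + y p) \<in> mco_polyhedron P Pstar C Ord (\<lambda>p. lam p + mu p)"
  unfolding mco_polyhedron_def mem_Collect_eq
proof (intro conjI allI impI ballI)
  show "x p + y p = 0" if "p \<notin> P" for p
    using x y that unfolding mco_polyhedron_def by simp
  show "x a + y a = lam a + mu a" if "a \<in> Pstar" for a
    using x y that unfolding mco_polyhedron_def by simp
  show "x p + y p \<ge> 0" if "p \<in> C" for p
    using x y that unfolding mco_polyhedron_def by (simp add: add_nonneg_nonneg)
  show "sum_list (map (\<lambda>p. x p + y p) ps) \<le> (x b + y b) - (x a + y a)"
    if "a \<in> Pstar \<union> Ord" "b \<in> Pstar \<union> Ord" "set ps \<subseteq> C" "successively (covers P) (a # ps @ [b])"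
    for a b ps
  proof -
    have "sum_list (map x ps) \<le> x b - x a" "sum_list (map y ps) \<le> y b - y a"
      using x y that unfolding mco_polyhedron_def by blast+
    then show ?thesis
      by (simp add: sum_list_addf)
  qed
qed

lemma mco_lattice_points_add:
  assumes "x \<in> mco_lattice_points P Pstar C Ord lam" "y \<in> mco_lattice_points P Pstar C Ord mu"
  shows "(\<lambda>p. x p + y p) \<in> mco_lattice_points P Pstar C Ord (\<lambda>p. lam p + mu p)"
  using assms mco_polyhedron_add unfolding mco_lattice_points_def by (auto intro: Ints_add)

lemma mco_polyhedron_transport_decomposition:
  assumes "finite P" "P = Pstar \<union> C \<union> Ord" "Pstar \<inter> C = {}" "C \<inter> Ord = {}"
    and "mono g" "mono h" "\<And>t. g t + h t = t"
    and "\<forall>a\<in>Pstar. g (lam a + mu a) = lam a" "\<forall>a\<in>Pstar. h (lam a + mu a) = mu a"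
    and z: "z \<in> mco_polyhedron P Pstar C Ord (\<lambda>p. lam p + mu p)"
  shows "transport P (Pstar \<union> Ord) C g z \<in> mco_polyhedron P Pstar C Ord lam"
    and "transport P (Pstar \<union> Ord) C h z \<in> mco_polyhedron P Pstar C Ord mu"
    and "z = (\<lambda>p. transport P (Pstar \<union> Ord) C g z p + transport P (Pstar \<union> Ord) C h z p)"
proof -
  show "transport P (Pstar \<union> Ord) C g z \<in> mco_polyhedron P Pstar C Ord lam"
    using transport_mem_mco_polyhedron[OF assms(1-4) z assms(5,8)] .
  show "transport P (Pstar \<union> Ord) C h z \<in> mco_polyhedron P Pstar C Ord mu"
    using transport_mem_mco_polyhedron[OF assms(1-4) z assms(6,9)] .
  have "\<forall>p. p \<notin> P \<longrightarrow> z p = 0"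
    using z unfolding mco_polyhedron_def by blast
  then have vanish: "z p = 0" if "p \<notin> Pstar \<union> Ord \<union> C" for p
    using that assms(2) by auto
  show "z = (\<lambda>p. transport P (Pstar \<union> Ord) C g z p + transport P (Pstar \<union> Ord) C h z p)"
  proof (rule ext)
    fix p
    show "z p = transport P (Pstar \<union> Ord) C g z p + transport P (Pstar \<union> Ord) C h z p"
      using vanish by (intro transport_add[OF assms(7), symmetric])
  qed
qed

lemma mco_polyhedron_split:
  assumes "finite P" "P = Pstar \<union> C \<union> Ord" "Pstar \<inter> C = {}" "C \<inter> Ord = {}"
    and "mono g" "mono h" "\<And>t. g t + h t = t"
    and "\<forall>a\<in>Pstar. g (lam a + mu a) = lam a" "\<forall>a\<in>Pstar. h (lam a + mu a) = mu a"
  shows "mco_polyhedron P Pstar C Ord (\<lambda>p. lam p + mu p)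
           = minkowski_sum (mco_polyhedron P Pstar C Ord lam) (mco_polyhedron P Pstar C Ord mu)"
  using mco_polyhedron_add mco_polyhedron_transport_decomposition[OF assms]
  by (intro minkowski_sum_eqI) blast+

lemma mco_lattice_points_split:
  assumes "finite P" "P = Pstar \<union> C \<union> Ord" "Pstar \<inter> C = {}" "C \<inter> Ord = {}"
    and "mono g" "mono h" "\<And>t. g t + h t = t"
    and "\<forall>a\<in>Pstar. g (lam a + mu a) = lam a" "\<forall>a\<in>Pstar. h (lam a + mu a) = mu a"
    and "\<And>t. t \<in> \<int> \<Longrightarrow> g t \<in> \<int>" "\<And>t. t \<in> \<int> \<Longrightarrow> h t \<in> \<int>"
  shows "mco_lattice_points P Pstar C Ord (\<lambda>p. lam p + mu p)
           = minkowski_sum (mco_lattice_points P Pstar C Ord lam) (mco_lattice_points P Pstar C Ord mu)"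
proof (rule minkowski_sum_eqI)
  show "(\<lambda>p. x p + y p) \<in> mco_lattice_points P Pstar C Ord (\<lambda>p. lam p + mu p)"
    if "x \<in> mco_lattice_points P Pstar C Ord lam" "y \<in> mco_lattice_points P Pstar C Ord mu" for x y
    using that by (rule mco_lattice_points_add)
next
  fix z assume "z \<in> mco_lattice_points P Pstar C Ord (\<lambda>p. lam p + mu p)"
  then have z: "z \<in> mco_polyhedron P Pstar C Ord (\<lambda>p. lam p + mu p)" and "\<forall>p\<in>P. z p \<in> \<int>"
    unfolding mco_lattice_points_def by auto
  then have z_Ints: "\<forall>p \<in> (Pstar \<union> Ord) \<union> C. z p \<in> \<int>"
    using assms(2) by auto
  have fin: "finite (Pstar \<union> Ord)" "finite C"
    using assms(1,2) by (auto intro: finite_subset)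
  let ?x = "transport P (Pstar \<union> Ord) C g z" and ?y = "transport P (Pstar \<union> Ord) C h z"
  note dec = mco_polyhedron_transport_decomposition[OF assms(1-9) z]
  show "\<exists>x\<in>mco_lattice_points P Pstar C Ord lam. \<exists>y\<in>mco_lattice_points P Pstar C Ord mu.
          z = (\<lambda>p. x p + y p)"
  proof (intro bexI)
    show "z = (\<lambda>p. ?x p + ?y p)"
      by (rule dec(3))
    show "?x \<in> mco_lattice_points P Pstar C Ord lam"
      unfolding mco_lattice_points_def using dec(1) transport_Ints[OF fin z_Ints assms(10)] by simp
    show "?y \<in> mco_lattice_points P Pstar C Ord mu"
      unfolding mco_lattice_points_def using dec(2) transport_Ints[OF fin z_Ints assms(11)] by simp
  qed
qed

section \<open>Comonotone markings and their splitting\<close>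

lemma length_ideal_blocks: "length (ideal_blocks Q Is) = Suc (length Is)"
  unfolding ideal_blocks_def Let_def by simp

lemma nth_ideal_blocks:
  "j \<le> length Is \<Longrightarrow>
     ideal_blocks Q Is ! j = (Is @ [Q]) ! j - (if j = 0 then {} else (Is @ [Q]) ! (j - 1))"
  unfolding ideal_blocks_def Let_def by (simp del: upt_Suc)

lemma ideal_blocks_cover:
  assumes "a \<in> Q"
  obtains j where "j \<le> length Is" "a \<in> ideal_blocks Q Is ! j"
proof -
  let ?Js = "Is @ [Q]"
  define j where "j = (LEAST j. a \<in> ?Js ! j)"
  have in_last: "a \<in> ?Js ! length Is"
    using assms by simp
  have "a \<in> ?Js ! j"
    unfolding j_def by (rule LeastI[of "\<lambda>j. a \<in> ?Js ! j", OF in_last])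
  moreover have "j \<le> length Is"
    unfolding j_def by (rule Least_le[of "\<lambda>j. a \<in> ?Js ! j", OF in_last])
  moreover have "a \<notin> ?Js ! (j - 1)" if "j \<noteq> 0"
    using not_less_Least[of "j - 1" "\<lambda>j. a \<in> ?Js ! j"] that unfolding j_def[symmetric] by simp
  ultimately have "a \<in> ideal_blocks Q Is ! j"
    using nth_ideal_blocks[of j Is Q] by (cases "j = 0") simp_all
  with \<open>j \<le> length Is\<close> show ?thesis
    by (rule that)
qed

lemma ideal_blocks_nonempty:
  assumes "Is \<in> ideal_chains Q" "0 < j" "j \<le> length Is"
  shows "ideal_blocks Q Is ! j \<noteq> {}"
proof -
  let ?Js = "Is @ [Q]"
  have "last Is \<subset> Q" if "Is \<noteq> []"
  proof -
    have "last Is \<in> set Is"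
      using that by simp
    then have "last Is \<subseteq> Q"
      using assms(1) unfolding ideal_chains_def order_ideal_def by blast
    moreover have "last Is \<noteq> Q"
      using assms(1) that unfolding ideal_chains_def by blast
    ultimately show ?thesis
      by blast
  qed
  then have "successively (\<subset>) ?Js"
    using assms(1) successively_append_iff[of "(\<subset>)" Is "[Q]"] unfolding ideal_chains_def by auto
  then have "?Js ! (j - 1) \<subset> ?Js ! Suc (j - 1)"
    by (rule successively_nth) (use assms in simp)
  then show ?thesis
    using assms(2,3) nth_ideal_blocks[of j Is Q] by auto
qed

lemma markings_L_block_const:
  assumes "f \<in> markings_L Q Is" "j \<le> length Is"
    and "a \<in> ideal_blocks Q Is ! j" "b \<in> ideal_blocks Q Is ! j"
  shows "f a = f b"
proof -
  have "ideal_blocks Q Is ! j \<in> set (ideal_blocks Q Is)"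
    using assms(2) by (simp add: length_ideal_blocks)
  then show ?thesis
    using assms(1,3,4) unfolding markings_L_def by blast
qed

lemma markings_L_block_step:
  assumes "f \<in> markings_L Q Is" "j < length Is"
    and "a \<in> ideal_blocks Q Is ! j" "b \<in> ideal_blocks Q Is ! Suc j"
  shows "f a \<le> f b"
proof -
  have "Suc j < length (ideal_blocks Q Is)"
    using assms(2) by (simp add: length_ideal_blocks)
  then show ?thesis
    using assms(1,3,4) unfolding markings_L_def by blast
qed

lemma markings_L_mono_blocks:
  assumes "Is \<in> ideal_chains Q" "f \<in> markings_L Q Is"
    and "i \<le> j" "j \<le> length Is" "a \<in> ideal_blocks Q Is ! i" "b \<in> ideal_blocks Q Is ! j"
  shows "f a \<le> f b"
  using assms(3-6)
proof (induction j arbitrary: b)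
  case 0
  then show ?case
    using markings_L_block_const[OF assms(2), of 0 a b] by simp
next
  case (Suc j)
  show ?case
  proof (cases "i = Suc j")
    case True
    then show ?thesis
      using markings_L_block_const[OF assms(2), of i a b] Suc.prems by simp
  next
    case False
    then have "i \<le> j"
      using Suc.prems(1) by simp
    have "ideal_blocks Q Is ! j \<noteq> {}"
    proof (cases "j = 0")
      case True
      then show ?thesis
        using Suc.prems(3) \<open>i \<le> j\<close> by auto
    next
      case False
      then show ?thesis
        using ideal_blocks_nonempty[OF assms(1), of j] Suc.prems(2) by simp
    qed
    then obtain c where c: "c \<in> ideal_blocks Q Is ! j"
      by blast
    have "f a \<le> f c"
      using Suc.IH[OF \<open>i \<le> j\<close> _ Suc.prems(3) c] Suc.prems(2) by simp
    also have "f c \<le> f b"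
      using markings_L_block_step[OF assms(2) _ c Suc.prems(4)] Suc.prems(2) by simp
    finally show ?thesis .
  qed
qed

definition comonotone_on :: "'a set \<Rightarrow> ('a \<Rightarrow> real) \<Rightarrow> ('a \<Rightarrow> real) \<Rightarrow> bool" where
  "comonotone_on Q f g \<longleftrightarrow>
     (\<forall>a\<in>Q. \<forall>b\<in>Q. (f a \<le> f b \<and> g a \<le> g b) \<or> (f b \<le> f a \<and> g b \<le> g a))"

lemma markings_L_comonotone:
  assumes "Is \<in> ideal_chains Q" "lam \<in> markings_L Q Is" "mu \<in> markings_L Q Is"
  shows "comonotone_on Q lam mu"
  unfolding comonotone_on_def
proof (intro ballI)
  fix a b assume "a \<in> Q" "b \<in> Q"
  obtain i where i: "i \<le> length Is" "a \<in> ideal_blocks Q Is ! i"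
    using ideal_blocks_cover[OF \<open>a \<in> Q\<close>] by blast
  obtain j where j: "j \<le> length Is" "b \<in> ideal_blocks Q Is ! j"
    using ideal_blocks_cover[OF \<open>b \<in> Q\<close>] by blast
  show "(lam a \<le> lam b \<and> mu a \<le> mu b) \<or> (lam b \<le> lam a \<and> mu b \<le> mu a)"
  proof (cases "i \<le> j")
    case True
    then show ?thesis
      using markings_L_mono_blocks[OF assms(1) _ True j(1) i(2) j(2)] assms(2,3) by blast
  next
    case False
    then have "j \<le> i"
      by simp
    then show ?thesis
      using markings_L_mono_blocks[OF assms(1) _ \<open>j \<le> i\<close> i(1) j(2) i(2)] assms(2,3) by blast
  qed
qed

lemma Min_image_le_add:
  fixes F G :: "'a \<Rightarrow> 'b::linordered_ab_group_add"
  assumes "finite Q" "Q \<noteq> {}" "\<And>a. a \<in> Q \<Longrightarrow> F a \<le> G a + c"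
  shows "(MIN a\<in>Q. F a) \<le> (MIN a\<in>Q. G a) + c"
proof -
  have "(MIN a\<in>Q. G a) \<in> G ` Q"
    using assms(1,2) by simp
  then obtain a where a: "a \<in> Q" "(MIN a\<in>Q. G a) = G a"
    by blast
  have "(MIN a\<in>Q. F a) \<le> F a"
    using assms(1) a(1) by simp
  also have "\<dots> \<le> (MIN a\<in>Q. G a) + c"
    using assms(3)[OF a(1)] a(2) by simp
  finally show ?thesis .
qed

definition comonotone_split :: "'a set \<Rightarrow> ('a \<Rightarrow> real) \<Rightarrow> ('a \<Rightarrow> real) \<Rightarrow> real \<Rightarrow> real" where
  "comonotone_split Q lam mu t =
     (if Q = {} then 0 else MIN a\<in>Q. mu a + max 0 (t - (lam a + mu a)))"

lemma comonotone_split_shift_le: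
  assumes "finite Q" "t \<le> t'"
  shows "comonotone_split Q lam mu t \<le> comonotone_split Q lam mu t'"
    and "comonotone_split Q lam mu t' \<le> comonotone_split Q lam mu t + (t' - t)"
proof -
  let ?h = "\<lambda>t a. mu a + max 0 (t - (lam a + mu a))"
  have "(MIN a\<in>Q. ?h t a) \<le> (MIN a\<in>Q. ?h t' a) + 0"
    and "(MIN a\<in>Q. ?h t' a) \<le> (MIN a\<in>Q. ?h t a) + (t' - t)" if "Q \<noteq> {}"
    using assms that by (intro Min_image_le_add; simp)+
  then show "comonotone_split Q lam mu t \<le> comonotone_split Q lam mu t'"
    and "comonotone_split Q lam mu t' \<le> comonotone_split Q lam mu t + (t' - t)"
    using assms(2) by (auto simp: comonotone_split_def)
qed

lemma comonotone_split_mono: "finite Q \<Longrightarrow> mono (comonotone_split Q lam mu)"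
  by (rule monoI) (rule comonotone_split_shift_le(1))

lemma comonotone_split_complement_mono:
  assumes "finite Q"
  shows "mono (\<lambda>t. t - comonotone_split Q lam mu t)"
proof (rule monoI)
  fix t t' :: real
  assume "t \<le> t'"
  with assms show "t - comonotone_split Q lam mu t \<le> t' - comonotone_split Q lam mu t'"
    using comonotone_split_shift_le(2)[of Q t t' lam mu] by simp
qed

lemma comonotone_split_eq:
  assumes "finite Q" "comonotone_on Q lam mu" "b \<in> Q"
  shows "comonotone_split Q lam mu (lam b + mu b) = mu b"
proof -
  let ?h = "\<lambda>a. mu a + max 0 (lam b + mu b - (lam a + mu a))"
  have "(MIN a\<in>Q. ?h a) \<le> ?h b"
    using assms(1,3) by (intro Min_le) (auto intro!: image_eqI[of _ _ b])
  moreover have "mu b \<le> ?h a" if "a \<in> Q" for a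
    using assms(2,3) that unfolding comonotone_on_def by fastforce
  then have "mu b \<le> (MIN a\<in>Q. ?h a)"
    using assms(1,3) by (subst Min_ge_iff) auto
  ultimately show ?thesis
    using assms(3) by (auto simp: comonotone_split_def)
qed

lemma comonotone_split_Ints:
  assumes "finite Q" "\<forall>a\<in>Q. lam a \<in> \<int> \<and> mu a \<in> \<int>" "t \<in> \<int>"
  shows "comonotone_split Q lam mu t \<in> \<int>"
proof -
  let ?h = "\<lambda>a. mu a + max 0 (t - (lam a + mu a))"
  have "?h ` Q \<subseteq> \<int>"
    using assms(2,3) by (auto simp: max_def)
  moreover have "Q \<noteq> {} \<Longrightarrow> (MIN a\<in>Q. ?h a) \<in> ?h ` Q"
    using assms(1) by simp
  ultimately show ?thesis
    by (auto simp: comonotone_split_def)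
qed

theorem theorem2p10:
  fixes P Pstar C Ord :: "'a::order set"
    and Is :: "'a set list"
    and lam mu :: "'a \<Rightarrow> real"
  assumes "finite P"
    and "P = Pstar \<union> C \<union> Ord"
    and "Pstar \<inter> C = {}" and "Pstar \<inter> Ord = {}" and "C \<inter> Ord = {}"
    and "minimal_elements P \<subseteq> Pstar"
    and "Is \<in> ideal_chains Pstar"
    and "lam \<in> markings_L Pstar Is" and "mu \<in> markings_L Pstar Is"
  shows "mco_polyhedron P Pstar C Ord (\<lambda>p. lam p + mu p)
           = minkowski_sum (mco_polyhedron P Pstar C Ord lam) (mco_polyhedron P Pstar C Ord mu)
       \<and> ((\<forall>a\<in>Pstar. lam a \<in> \<int>) \<and> (\<forall>a\<in>Pstar. mu a \<in> \<int>) \<longrightarrow>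
           mco_lattice_points P Pstar C Ord (\<lambda>p. lam p + mu p)
           = minkowski_sum (mco_lattice_points P Pstar C Ord lam) (mco_lattice_points P Pstar C Ord mu))"
proof -
  let ?h = "comonotone_split Pstar lam mu"
  let ?g = "\<lambda>t. t - ?h t"
  have fin: "finite Pstar"
    using assms(1,2) by simp
  have "comonotone_on Pstar lam mu"
    using assms(7-9) by (rule markings_L_comonotone)
  then have h_eq: "\<forall>a\<in>Pstar. ?h (lam a + mu a) = mu a"
    using comonotone_split_eq[OF fin] by blast
  then have g_eq: "\<forall>a\<in>Pstar. ?g (lam a + mu a) = lam a"
    by simp
  have sum_eq: "?g t + ?h t = t" for t
    by simp
  note split_assms = assms(1-3,5) comonotone_split_complement_mono[OF fin]
    comonotone_split_mono[OF fin] sum_eq g_eq h_eq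
  have "mco_polyhedron P Pstar C Ord (\<lambda>p. lam p + mu p)
      = minkowski_sum (mco_polyhedron P Pstar C Ord lam) (mco_polyhedron P Pstar C Ord mu)"
    by (rule mco_polyhedron_split[OF split_assms])
  moreover have "mco_lattice_points P Pstar C Ord (\<lambda>p. lam p + mu p)
      = minkowski_sum (mco_lattice_points P Pstar C Ord lam) (mco_lattice_points P Pstar C Ord mu)"
    if lam_Ints: "\<forall>a\<in>Pstar. lam a \<in> \<int>" and mu_Ints: "\<forall>a\<in>Pstar. mu a \<in> \<int>"
  proof -
    have h_Ints: "?h t \<in> \<int>" if "t \<in> \<int>" for t
      using comonotone_split_Ints[OF fin _ that] lam_Ints mu_Ints by blast
    show ?thesis
      by (rule mco_lattice_points_split[OF split_assms]) (simp_all add: h_Ints)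
  qed
  ultimately show ?thesis
    by blast
qed

end
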